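(* The function $\sqrt{1-\mathcal{F}_{GM}(\rho,\sigma)}$, where $\mathcal{F}_{GM}(\rho,\sigma)=\operatorname{tr}(\rho\sigma)/\sqrt{\operatorname{tr}(\rho^2)\operatorname{tr}(\sigma^2)}$, is a metric on the set of density matrices on a fixed finite-dimensional complex Hilbert space.
   Context: A density matrix is a positive semidefinite operator of unit trace. A metric is a function that is nonnegative, vanishes exactly on equal arguments, is symmetric, and satisfies the triangle inequality. *)

theory Defs
  imports "HOL-Analysis.Analysis" "HOL-Library.Complex_Order"
begin

text \<open>Positive semidefinite complex matrix: the quadratic form x* A x is a
  nonnegative real for every vector x (complex order: 0 \<le> z iff z real, Re z \<ge> 0).\<close>
definition positive_semidef :: "complex^'n^'n \<Rightarrow> bool" where
  "positive_semidef A \<longleftrightarrow>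
     (\<forall>x :: complex^'n. 0 \<le> (\<Sum>i\<in>UNIV. \<Sum>j\<in>UNIV. cnj (x$i) * (A$i$j) * (x$j)))"

definition density_matrix :: "complex^'n^'n \<Rightarrow> bool" where
  "density_matrix \<rho> \<longleftrightarrow> positive_semidef \<rho> \<and> trace \<rho> = 1"

definition density_matrices :: "(complex^'n^'n) set" where
  "density_matrices = {\<rho>. density_matrix \<rho>}"

text \<open>Geometric-mean fidelity. The traces involved are real for Hermitian matrices;
  we take real parts to land in the reals.\<close>
definition F_GM :: "complex^'n^'n \<Rightarrow> complex^'n^'n \<Rightarrow> real" where
  "F_GM \<rho> \<sigma> = Re (trace (\<rho> ** \<sigma>)) / sqrt (Re (trace (\<rho> ** \<rho>)) * Re (trace (\<sigma> ** \<sigma>)))"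

definition is_metric_on :: "'a set \<Rightarrow> ('a \<Rightarrow> 'a \<Rightarrow> real) \<Rightarrow> bool" where
  "is_metric_on S d \<longleftrightarrow>
     (\<forall>x\<in>S. \<forall>y\<in>S. 0 \<le> d x y) \<and>
     (\<forall>x\<in>S. \<forall>y\<in>S. d x y = 0 \<longleftrightarrow> x = y) \<and>
     (\<forall>x\<in>S. \<forall>y\<in>S. d x y = d y x) \<and>
     (\<forall>x\<in>S. \<forall>y\<in>S. \<forall>z\<in>S. d x z \<le> d x y + d y z)"

end

theory Submission
  imports Defs
begin

text \<open>Flattening a matrix into a vector of \<open>complex^('n \<times> 'n)\<close>, viewed as a real inner product
  space, turns \<open>Re (trace (\<rho> ** \<sigma>))\<close> into the inner product of the flattened matrices, since
  density matrices are Hermitian. Hence \<open>F_GM \<rho> \<sigma>\<close> is the inner product of the normalised vectors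
  \<open>u\<^sub>\<rho>, u\<^sub>\<sigma>\<close>, and \<open>1 - F_GM \<rho> \<sigma> = |u\<^sub>\<rho> - u\<^sub>\<sigma>|\<^sup>2 / 2\<close>. So the distance in question is a Euclidean
  distance restricted to the unit sphere, pulled back along \<open>\<rho> \<mapsto> u\<^sub>\<rho>\<close>, which is injective on
  density matrices because the trace fixes the scale.\<close>

definition quad_form :: "complex^'n^'n \<Rightarrow> complex^'n \<Rightarrow> complex" where
  "quad_form A x = (\<Sum>i\<in>UNIV. \<Sum>j\<in>UNIV. cnj (x$i) * (A$i$j) * (x$j))"

definition hermitian :: "complex^'n^'n \<Rightarrow> bool" where
  "hermitian A \<longleftrightarrow> (\<forall>i j. A$j$i = cnj (A$i$j))"

lemma positive_semidef_iff_quad_form_nonneg: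
  "positive_semidef A \<longleftrightarrow> (\<forall>x. 0 \<le> quad_form A x)"
  by (simp add: positive_semidef_def quad_form_def)

lemma quad_form_axis: "quad_form A (axis i a) = cnj a * A$i$i * a"
  by (simp add: quad_form_def axis_def if_distrib[of cnj] mult_delta_left mult_delta_right cong: if_cong)

lemma quad_form_axis_add_axis:
  assumes "i \<noteq> j"
  shows "quad_form A (axis i a + axis j b)
           = cnj a * A$i$i * a + cnj a * A$i$j * b + cnj b * A$j$i * a + cnj b * A$j$j * b"
  using assms
  by (simp add: quad_form_def axis_def ring_distribs sum.distrib if_distrib[of cnj]
                mult_delta_left mult_delta_right cong: if_cong)

lemma hermitian_if_quad_form_real:
  assumes real: "\<And>x. Im (quad_form A x) = 0"
  shows "hermitian A"
  unfolding hermitian_def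
proof (intro allI)
  fix i j
  have diag: "Im (A$k$k) = 0" for k
    using real[of "axis k 1"] by (simp add: quad_form_axis)
  show "A$j$i = cnj (A$i$j)"
  proof (cases "i = j")
    case True
    then show ?thesis using diag[of i] by (simp add: complex_eq_iff)
  next
    case False
    have "Im (A$i$j + A$j$i) = 0"
      using real[of "axis i 1 + axis j 1"] diag[of i] diag[of j]
      by (simp add: quad_form_axis_add_axis[OF False])
    moreover have "Re (A$i$j - A$j$i) = 0"
      using real[of "axis i 1 + axis j \<i>"] diag[of i] diag[of j]
      by (simp add: quad_form_axis_add_axis[OF False])
    ultimately show ?thesis by (simp add: complex_eq_iff)
  qed
qed

lemma positive_semidef_imp_hermitian: "positive_semidef A \<Longrightarrow> hermitian A"
  by (rule hermitian_if_quad_form_real)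
     (simp add: positive_semidef_iff_quad_form_nonneg less_eq_complex_def)

definition vectorize :: "'a^'n^'m \<Rightarrow> 'a^('m \<times> 'n)" where
  "vectorize A = (\<chi> p. A $ fst p $ snd p)"

lemma vectorize_eq_iff: "vectorize A = vectorize B \<longleftrightarrow> A = B"
  by (auto simp: vec_eq_iff vectorize_def)

lemma vectorize_scaleR: "vectorize (c *\<^sub>R A) = c *\<^sub>R vectorize A"
  by (simp add: vectorize_def vec_eq_iff)

lemma vectorize_eq_0_iff: "vectorize A = 0 \<longleftrightarrow> A = 0"
  by (auto simp: vec_eq_iff vectorize_def)

lemma inner_vectorize_hermitian:
  assumes "hermitian B"
  shows "inner (vectorize A) (vectorize B) = Re (trace (A ** B))"
proof -
  have "inner (vectorize A) (vectorize B) = (\<Sum>p\<in>UNIV. inner (A $ fst p $ snd p) (B $ fst p $ snd p))"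
    by (simp add: inner_vec_def vectorize_def)
  also have "\<dots> = (\<Sum>i\<in>UNIV. \<Sum>j\<in>UNIV. inner (A$i$j) (B$i$j))"
    by (simp add: sum.cartesian_product case_prod_beta)
  also have "\<dots> = (\<Sum>i\<in>UNIV. \<Sum>j\<in>UNIV. Re (A$i$j * B$j$i))"
  proof (intro sum.cong refl)
    fix i j
    have "B$j$i = cnj (B$i$j)"
      using assms unfolding hermitian_def by blast
    then show "inner (A$i$j) (B$i$j) = Re (A$i$j * B$j$i)"
      by (simp add: inner_complex_def)
  qed
  also have "\<dots> = Re (trace (A ** B))"
    by (simp add: trace_def matrix_matrix_mult_def)
  finally show ?thesis .
qed

lemma F_GM_eq_inner_sgn_vectorize:
  assumes "hermitian A" "hermitian B"
  shows "F_GM A B = inner (sgn (vectorize A)) (sgn (vectorize B))"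
proof -
  have "F_GM A B = inner (vectorize A) (vectorize B) / (norm (vectorize A) * norm (vectorize B))"
    by (simp add: F_GM_def inner_vectorize_hermitian[OF assms(1)] inner_vectorize_hermitian[OF assms(2)]
                  real_sqrt_mult norm_eq_sqrt_inner)
  then show ?thesis
    by (simp add: sgn_div_norm divide_inverse mult_ac)
qed

lemma sqrt_one_minus_inner_eq_dist:
  fixes u v :: "'a::real_inner"
  assumes "norm u = 1" "norm v = 1"
  shows "sqrt (1 - inner u v) = dist u v / sqrt 2"
proof -
  have "1 - inner u v = (dist u v)\<^sup>2 / 2"
    using assms by (simp add: dot_norm_neg dist_norm field_simps)
  then show ?thesis
    by (simp only: real_sqrt_divide real_sqrt_abs abs_of_nonneg[OF zero_le_dist])
qed

lemma trace_scaleR: "trace (c *\<^sub>R A) = of_real c * trace (A :: complex^'n^'n)"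
  unfolding trace_def vector_scaleR_component by (simp add: scaleR_conv_of_real sum_distrib_left)

lemma vectorize_nonzero_if_trace_nonzero: "trace A \<noteq> 0 \<Longrightarrow> vectorize A \<noteq> 0"
  by (auto simp: vectorize_eq_0_iff trace_def)

lemma sgn_eq_sgn_imp_eq_scaleR:
  fixes a b :: "'a::real_normed_vector"
  assumes "sgn a = sgn b"
  shows "a = (norm a / norm b) *\<^sub>R b"
proof -
  have "a = norm a *\<^sub>R sgn a"
    by (cases "a = 0") (simp_all add: sgn_div_norm)
  also have "\<dots> = (norm a / norm b) *\<^sub>R b"
    using assms by (simp add: sgn_div_norm divide_inverse)
  finally show ?thesis .
qed

lemma inj_on_sgn_vectorize_density_matrices:
  "inj_on (\<lambda>A. sgn (vectorize A)) (density_matrices :: (complex^'n^'n) set)"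
proof (rule inj_onI)
  fix A B :: "complex^'n^'n"
  assume "A \<in> density_matrices" "B \<in> density_matrices"
  then have trA: "trace A = 1" and trB: "trace B = 1"
    by (simp_all add: density_matrices_def density_matrix_def)
  assume "sgn (vectorize A) = sgn (vectorize B)"
  then obtain c where AcB: "A = c *\<^sub>R B"
    by (metis sgn_eq_sgn_imp_eq_scaleR vectorize_eq_iff vectorize_scaleR)
  then have "c = 1"
    using trA trB by (simp add: trace_scaleR)
  then show "A = B" using AcB by simp
qed

lemma is_metric_on_cong:
  assumes "\<And>x y. x \<in> S \<Longrightarrow> y \<in> S \<Longrightarrow> d x y = d' x y"
  shows "is_metric_on S d \<longleftrightarrow> is_metric_on S d'"
  using assms by (simp add: is_metric_on_def)

lemma is_metric_on_dist_inj_on: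
  assumes "inj_on f S" "c > 0"
  shows "is_metric_on S (\<lambda>x y. dist (f x) (f y) / c)"
  using assms
  by (auto simp: is_metric_on_def dist_commute inj_on_def add_divide_distrib[symmetric]
           intro!: divide_right_mono dist_triangle)

theorem theorem11:
  shows "is_metric_on (density_matrices :: (complex^'n^'n) set)
           (\<lambda>\<rho> \<sigma>. sqrt (1 - F_GM \<rho> \<sigma>))"
proof -
  let ?u = "\<lambda>A :: complex^'n^'n. sgn (vectorize A)"
  have dist_eq: "sqrt (1 - F_GM \<rho> \<sigma>) = dist (?u \<rho>) (?u \<sigma>) / sqrt 2"
    if "\<rho> \<in> density_matrices" "\<sigma> \<in> density_matrices" for \<rho> \<sigma>
  proof -
    have "hermitian \<rho>" "hermitian \<sigma>" "trace \<rho> = 1" "trace \<sigma> = 1"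
      using that positive_semidef_imp_hermitian
      by (auto simp: density_matrices_def density_matrix_def)
    then show ?thesis
      by (simp add: F_GM_eq_inner_sgn_vectorize sqrt_one_minus_inner_eq_dist norm_sgn
                    vectorize_nonzero_if_trace_nonzero)
  qed
  have "is_metric_on (density_matrices :: (complex^'n^'n) set) (\<lambda>\<rho> \<sigma>. sqrt (1 - F_GM \<rho> \<sigma>))
      \<longleftrightarrow> is_metric_on density_matrices (\<lambda>\<rho> \<sigma>. dist (?u \<rho>) (?u \<sigma>) / sqrt 2)"
    by (intro is_metric_on_cong dist_eq)
  moreover have "is_metric_on density_matrices (\<lambda>\<rho> \<sigma>. dist (?u \<rho>) (?u \<sigma>) / sqrt 2)"
    by (rule is_metric_on_dist_inj_on[OF inj_on_sgn_vectorize_density_matrices]) simp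
  ultimately show ?thesis
    by (rule iffD2)
qed

end
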